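(* Let $t$ be a record with versions $t'_1,\dots,t'_I$ and let $G'$ be its feasible sub-SUG, with layers $V'_1,\dots,V'_I$. This holds regardless of how the releases were generalized. For every $1\le i\le I$, the disclosure risk of $t'_i$ equals $1$ if and only if $|V'_i|=1$.
   Context: Data model. A microdata table is published repeatedly. Its records carry an identifier, quasi-identifier (QI) attributes and a sensitive attribute $S$ with a finite domain $\mathrm{dom}(S)$. Each published (generalized) table partitions its records, possibly including counterfeit records, into QI-groups. If a record $t$ appears in a release, its candidate sensitive set in that release is the set of sensitive values occurring in its QI-group; this set contains $t$'s actual sensitive value. The versions of $t$ are its records in the successive releases in which it appears, listed in order: $t'_1,\dots,t'_I$, with candidate sensitive sets $C_1,\dots,C_I$. Internal updates are governed by a publicly known transition probability $P_{trans}(a,b)\ge 0$ for $a,b\in\mathrm{dom}(S)$. Actual updates are feasible: $P_{trans}(t'_i[S],t'_{i+1}[S])>0$ for every $i$. Sensitive attribute update graph (SUG). The SUG of $t$ has, for each $i=1,\dots,I$, a layer $V_i=\{v_{i,s}: s\in C_i\}$ with one node per value of $C_i$. Each node has a weight $w(v_{i,s})>0$, its linking probability, and the weights in each layer sum to $1$; under the random-world assumption $w(v_{i,s})=1/|C_i|$. There is a directed edge $(v_{i,s},v_{i+1,s'})$ exactly when $P_{trans}(s,s')>0$, and its weight is $P_{trans}(s,s')$. Feasible sub-SUG. Obtain it from the SUG by repeatedly deleting a node, together with its incident edges, until no node can be deleted. A node is deleted if any of the following holds: it lies in $V_1$ and has no outgoing edge; it lies in $V_I$ and has no incoming edge; it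 lies in $V_i$ with $1<i<I$ and lacks an incoming edge or lacks an outgoing edge. When $I=1$, no node is deleted. Denote the remaining layers by $V'_i$. Disclosure risk. A feasible path is a path $p=(v'_{1,x_1},\dots,v'_{I,x_I})$ through the feasible sub-SUG with one node in each layer, where consecutive nodes are joined by edges. Its weight is $w(p)=w(v'_{I,x_I})\prod_{i=1}^{I-1} w(v'_{i,x_i})\,w(v'_{i,x_i},v'_{i+1,x_{i+1}})$. The disclosure risk of version $t'_i$ is the total weight of the feasible paths passing through the node of $V'_i$ that represents $t'_i[S]$, divided by the total weight of all feasible paths. *)

theory Defs
  imports Complex_Main
begin

(* Layers are indexed 1..I.  A node of the SUG is a pair (i, s) with s \<in> C i.
   'v is the (finite) domain dom(S) of the sensitive attribute. *)

definition sug_nodes :: "nat \<Rightarrow> (nat \<Rightarrow> 'v set) \<Rightarrow> (nat \<times> 'v) set" where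
  "sug_nodes I C = {(i, s). 1 \<le> i \<and> i \<le> I \<and> s \<in> C i}"

definition has_out :: "('v \<Rightarrow> 'v \<Rightarrow> real) \<Rightarrow> (nat \<times> 'v) set \<Rightarrow> nat \<Rightarrow> 'v \<Rightarrow> bool" where
  "has_out P N i s = (\<exists>s'. (Suc i, s') \<in> N \<and> P s s' > 0)"

definition has_in :: "('v \<Rightarrow> 'v \<Rightarrow> real) \<Rightarrow> (nat \<times> 'v) set \<Rightarrow> nat \<Rightarrow> 'v \<Rightarrow> bool" where
  "has_in P N i s = (\<exists>s'. 1 \<le> i - 1 \<and> (i - 1, s') \<in> N \<and> P s' s > 0)"

definition deletable :: "nat \<Rightarrow> ('v \<Rightarrow> 'v \<Rightarrow> real) \<Rightarrow> (nat \<times> 'v) set \<Rightarrow> nat \<times> 'v \<Rightarrow> bool" where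
  "deletable I P N v = (case v of (i, s) \<Rightarrow>
     v \<in> N \<and> 1 < I \<and>
     ((i = 1 \<and> \<not> has_out P N i s) \<or>
      (i = I \<and> \<not> has_in P N i s) \<or>
      (1 < i \<and> i < I \<and> (\<not> has_in P N i s \<or> \<not> has_out P N i s))))"

definition del_step :: "nat \<Rightarrow> ('v \<Rightarrow> 'v \<Rightarrow> real) \<Rightarrow> (nat \<times> 'v) set \<Rightarrow> (nat \<times> 'v) set \<Rightarrow> bool" where
  "del_step I P N N' = (\<exists>v. deletable I P N v \<and> N' = N - {v})"

definition is_feasible_subSUG :: "nat \<Rightarrow> (nat \<Rightarrow> 'v set) \<Rightarrow> ('v \<Rightarrow> 'v \<Rightarrow> real) \<Rightarrow> (nat \<times> 'v) set \<Rightarrow> bool" where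
  "is_feasible_subSUG I C P N =
     ((del_step I P)\<^sup>*\<^sup>* (sug_nodes I C) N \<and> \<not> (\<exists>v. deletable I P N v))"

definition layer :: "(nat \<times> 'v) set \<Rightarrow> nat \<Rightarrow> 'v set" where
  "layer N i = {s. (i, s) \<in> N}"

(* feasible paths: lists xs of length I, xs ! (i-1) is the value chosen in layer i *)
definition feasible_paths :: "nat \<Rightarrow> ('v \<Rightarrow> 'v \<Rightarrow> real) \<Rightarrow> (nat \<times> 'v) set \<Rightarrow> 'v list set" where
  "feasible_paths I P N = {xs. length xs = I \<and>
      (\<forall>i\<in>{1..I}. (i, xs ! (i - 1)) \<in> N) \<and>
      (\<forall>i\<in>{1..<I}. P (xs ! (i - 1)) (xs ! i) > 0)}"

definition path_weight :: "nat \<Rightarrow> (nat \<Rightarrow> 'v \<Rightarrow> real) \<Rightarrow> ('v \<Rightarrow> 'v \<Rightarrow> real) \<Rightarrow> 'v list \<Rightarrow> real" where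
  "path_weight I w P xs = w I (xs ! (I - 1)) *
      (\<Prod>i\<in>{1..<I}. w i (xs ! (i - 1)) * P (xs ! (i - 1)) (xs ! i))"

definition disclosure_risk :: "nat \<Rightarrow> (nat \<Rightarrow> 'v \<Rightarrow> real) \<Rightarrow> ('v \<Rightarrow> 'v \<Rightarrow> real) \<Rightarrow> (nat \<times> 'v) set \<Rightarrow> nat \<Rightarrow> 'v \<Rightarrow> real" where
  "disclosure_risk I w P N i a =
     (\<Sum>xs\<in>{xs \<in> feasible_paths I P N. xs ! (i - 1) = a}. path_weight I w P xs)
     / (\<Sum>xs\<in>feasible_paths I P N. path_weight I w P xs)"

end

theory Submission
  imports Defs
begin

text \<open>Every node that survives the deletion process lies on a feasible path: since it cannot
  be deleted, it has a successor (unless it is in the last layer) and a predecessor (unless it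
  is in the first layer), and these again cannot be deleted. The actual values of the record
  form a feasible path, so no node on it is ever deleted. Since all feasible paths have positive
  weight, the risk of \<open>t'\<^sub>i\<close> is \<open>1\<close> exactly when every feasible path passes through the actual
  node of layer \<open>i\<close>, i.e.\ when that node is the only one left in \<open>V'\<^sub>i\<close>.\<close>

definition is_walk :: "('v \<Rightarrow> 'v \<Rightarrow> real) \<Rightarrow> (nat \<times> 'v) set \<Rightarrow> nat \<Rightarrow> nat \<Rightarrow> (nat \<Rightarrow> 'v) \<Rightarrow> bool"
  where "is_walk P N a b f \<longleftrightarrow>
    (\<forall>j. a \<le> j \<and> j \<le> b \<longrightarrow> (j, f j) \<in> N) \<and> (\<forall>j. a \<le> j \<and> j < b \<longrightarrow> 0 < P (f j) (f (Suc j)))"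

lemma is_walk_refl: "(a, s) \<in> N \<Longrightarrow> is_walk P N a a (\<lambda>_. s)"
  by (auto simp: is_walk_def)

lemma is_walk_snoc:
  assumes "is_walk P N a b f" "a \<le> b" "(Suc b, s) \<in> N" "0 < P (f b) s"
  shows "is_walk P N a (Suc b) (f(Suc b := s))"
  using assms by (auto simp: is_walk_def le_Suc_eq)

lemma is_walk_cons:
  assumes "is_walk P N (Suc a) b f" "Suc a \<le> b" "(a, s) \<in> N" "0 < P s (f (Suc a))"
  shows "is_walk P N a b (f(a := s))"
  unfolding is_walk_def
proof (intro conjI allI impI)
  fix j assume "a \<le> j \<and> j \<le> b"
  then show "(j, (f(a := s)) j) \<in> N"
    using assms by (cases "j = a") (auto simp: is_walk_def)
next
  fix j assume "a \<le> j \<and> j < b"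
  then show "0 < P ((f(a := s)) j) ((f(a := s)) (Suc j))"
    using assms by (cases "j = a") (auto simp: is_walk_def)
qed

lemma is_walk_append:
  assumes "is_walk P N a b f" "is_walk P N b c g" "f b = g b"
  shows "is_walk P N a c (\<lambda>j. if j \<le> b then f j else g j)"
  unfolding is_walk_def
proof (intro conjI allI impI)
  fix j assume "a \<le> j \<and> j \<le> c"
  then show "(j, if j \<le> b then f j else g j) \<in> N"
    using assms(1,2) by (auto simp: is_walk_def)
next
  fix j assume j: "a \<le> j \<and> j < c"
  show "0 < P (if j \<le> b then f j else g j) (if Suc j \<le> b then f (Suc j) else g (Suc j))"
  proof (cases "Suc j \<le> b")
    case True
    then show ?thesis using j assms(1) by (auto simp: is_walk_def)
  next
    case False
    then have "(if j \<le> b then f j else g j) = g j"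
      using assms(3) by (auto simp: not_less_eq_eq)
    then show ?thesis using False j assms(2) by (auto simp: is_walk_def)
  qed
qed

lemma feasible_path_of_walk:
  assumes "is_walk P N 1 I f"
  shows "map (f \<circ> Suc) [0..<I] \<in> feasible_paths I P N"
  using assms unfolding is_walk_def feasible_paths_def
  by (auto simp: Suc_le_eq)

lemma walk_of_feasible_path:
  assumes "xs \<in> feasible_paths I P N"
  shows "is_walk P N 1 I (\<lambda>j. xs ! (j - 1))"
  using assms unfolding is_walk_def feasible_paths_def by auto

lemma has_out_if_not_deletable:
  assumes "\<not> deletable I P N (j, s)" "(j, s) \<in> N" "1 \<le> j" "j < I"
  shows "has_out P N j s"
  using assms by (cases "j = 1") (auto simp: deletable_def)

lemma has_in_if_not_deletable:
  assumes "\<not> deletable I P N (j, s)" "(j, s) \<in> N" "1 < j" "j \<le> I"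
  shows "has_in P N j s"
  using assms by (cases "j = I") (auto simp: deletable_def)

lemma walk_extends_forward:
  assumes nd: "\<nexists>v. deletable I P N v" and "(i, s) \<in> N" "1 \<le> i" "i \<le> k" "k \<le> I"
  shows "\<exists>f. f i = s \<and> is_walk P N i k f"
  using \<open>i \<le> k\<close>
proof (induction k rule: dec_induct)
  case base
  show ?case using \<open>(i, s) \<in> N\<close> is_walk_refl by fastforce
next
  case (step n)
  then obtain f where f: "f i = s" "is_walk P N i n f" by blast
  have "has_out P N n (f n)"
    using nd f step.hyps \<open>1 \<le> i\<close> \<open>k \<le> I\<close>
    by (intro has_out_if_not_deletable[of I]) (auto simp: is_walk_def)
  then obtain s' where "(Suc n, s') \<in> N" "0 < P (f n) s'"
    by (auto simp: has_out_def)
  then have "is_walk P N i (Suc n) (f(Suc n := s'))"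
    using f(2) step.hyps by (intro is_walk_snoc) auto
  moreover have "(f(Suc n := s')) i = s"
    using f(1) step.hyps by simp
  ultimately show ?case by blast
qed

lemma walk_extends_backward:
  assumes nd: "\<nexists>v. deletable I P N v" and "(i, s) \<in> N" "1 \<le> k" "k \<le> i" "i \<le> I"
  shows "\<exists>f. f i = s \<and> is_walk P N k i f"
  using \<open>k \<le> i\<close>
proof (induction k rule: inc_induct)
  case base
  show ?case using \<open>(i, s) \<in> N\<close> is_walk_refl by fastforce
next
  case (step n)
  then obtain f where f: "f i = s" "is_walk P N (Suc n) i f" by blast
  have "has_in P N (Suc n) (f (Suc n))"
    using nd f step.hyps \<open>1 \<le> k\<close> \<open>i \<le> I\<close>
    by (intro has_in_if_not_deletable[of I]) (auto simp: is_walk_def)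
  then obtain s' where "(n, s') \<in> N" "0 < P s' (f (Suc n))"
    by (auto simp: has_in_def)
  then have "is_walk P N n i (f(n := s'))"
    using f(2) step.hyps by (intro is_walk_cons) auto
  moreover have "(f(n := s')) i = s"
    using f(1) step.hyps by simp
  ultimately show ?case by blast
qed

lemma feasible_path_through_node:
  assumes nd: "\<nexists>v. deletable I P N v" and "(i, s) \<in> N" "1 \<le> i" "i \<le> I"
  shows "\<exists>xs \<in> feasible_paths I P N. xs ! (i - 1) = s"
proof -
  obtain g where g: "g i = s" "is_walk P N 1 i g"
    using walk_extends_backward[OF assms(1,2)] assms(3,4) by blast
  obtain f where f: "f i = s" "is_walk P N i I f"
    using walk_extends_forward[OF assms(1,2,3)] assms(4) by blast
  define h where "h j = (if j \<le> i then g j else f j)" for j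
  have "is_walk P N 1 I h"
    unfolding h_def using is_walk_append[OF g(2) f(2)] f(1) g(1) by simp
  then have "map (h \<circ> Suc) [0..<I] \<in> feasible_paths I P N"
    by (rule feasible_path_of_walk)
  moreover have "map (h \<circ> Suc) [0..<I] ! (i - 1) = s"
    using assms(3,4) g(1) by (simp add: h_def)
  ultimately show ?thesis by blast
qed

lemma layer_eq_feasible_path_values:
  assumes "\<nexists>v. deletable I P N v" "1 \<le> i" "i \<le> I"
  shows "layer N i = (\<lambda>xs. xs ! (i - 1)) ` feasible_paths I P N"
proof
  show "layer N i \<subseteq> (\<lambda>xs. xs ! (i - 1)) ` feasible_paths I P N"
  proof
    fix s assume "s \<in> layer N i"
    then obtain xs where "xs \<in> feasible_paths I P N" "xs ! (i - 1) = s"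
      using feasible_path_through_node[OF assms(1) _ assms(2,3)] by (auto simp: layer_def)
    then show "s \<in> (\<lambda>xs. xs ! (i - 1)) ` feasible_paths I P N"
      by (auto intro: rev_image_eqI)
  qed
  show "(\<lambda>xs. xs ! (i - 1)) ` feasible_paths I P N \<subseteq> layer N i"
    using assms(2,3) by (auto simp: layer_def feasible_paths_def)
qed

lemma not_deletable_on_walk:
  assumes "is_walk P N 1 I f" "1 \<le> j" "j \<le> I"
  shows "\<not> deletable I P N (j, f j)"
proof -
  have "has_out P N j (f j)" if "j < I"
  proof -
    have "(Suc j, f (Suc j)) \<in> N" "0 < P (f j) (f (Suc j))"
      using assms(1,2) that unfolding is_walk_def by auto
    then show ?thesis unfolding has_out_def by blast
  qed
  moreover have "has_in P N j (f j)" if "1 < j"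
  proof -
    have "(j - 1, f (j - 1)) \<in> N" "0 < P (f (j - 1)) (f j)"
      using assms that unfolding is_walk_def by (auto dest: spec[of _ "j - 1"])
    then show ?thesis using that unfolding has_in_def by auto
  qed
  ultimately show ?thesis
    using assms(2,3) by (auto simp: deletable_def)
qed

lemma del_step_preserves_walk:
  assumes "del_step I P N N'" "is_walk P N 1 I f"
  shows "is_walk P N' 1 I f"
proof -
  obtain v where v: "deletable I P N v" "N' = N - {v}"
    using assms(1) by (auto simp: del_step_def)
  have "v \<noteq> (j, f j)" if "1 \<le> j" "j \<le> I" for j
    using not_deletable_on_walk[OF assms(2) that] v(1) by blast
  then show ?thesis
    using assms(2) v(2) by (auto simp: is_walk_def)
qed

lemma del_steps_preserve_walk:
  "(del_step I P)\<^sup>*\<^sup>* N N' \<Longrightarrow> is_walk P N 1 I f \<Longrightarrow> is_walk P N' 1 I f"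
  by (induction rule: rtranclp_induct) (blast intro: del_step_preserves_walk)+

lemma del_steps_subset: "(del_step I P)\<^sup>*\<^sup>* N N' \<Longrightarrow> N' \<subseteq> N"
  by (induction rule: rtranclp_induct) (auto simp: del_step_def)

lemma finite_feasible_paths: "finite (feasible_paths I P (N :: (nat \<times> 'v::finite) set))"
proof (rule finite_subset)
  show "feasible_paths I P N \<subseteq> {xs. set xs \<subseteq> UNIV \<and> length xs = I}"
    by (auto simp: feasible_paths_def)
qed (rule finite_lists_length_eq, simp)

lemma path_weight_pos:
  assumes "xs \<in> feasible_paths I P N" "N \<subseteq> sug_nodes I C" "1 \<le> I"
    and w_pos: "\<And>j s. 1 \<le> j \<Longrightarrow> j \<le> I \<Longrightarrow> s \<in> C j \<Longrightarrow> w j s > 0"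
  shows "path_weight I w P xs > 0"
proof -
  have walk: "is_walk P N 1 I (\<lambda>j. xs ! (j - 1))"
    using assms(1) by (rule walk_of_feasible_path)
  have w: "0 < w j (xs ! (j - 1))" if "1 \<le> j" "j \<le> I" for j
    using walk assms(2) that w_pos unfolding is_walk_def sug_nodes_def by blast
  have P: "0 < P (xs ! (j - 1)) (xs ! j)" if "1 \<le> j" "j < I" for j
    using assms(1) that by (auto simp: feasible_paths_def)
  have "0 < (\<Prod>j\<in>{1..<I}. w j (xs ! (j - 1)) * P (xs ! (j - 1)) (xs ! j))"
    by (rule prod_pos) (use w P in \<open>auto intro!: mult_pos_pos\<close>)
  then show ?thesis
    unfolding path_weight_def using w \<open>1 \<le> I\<close> by simp
qed

lemma sum_filter_divide_sum_eq_1_iff: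
  fixes f :: "'a \<Rightarrow> real"
  assumes "finite A" "\<And>x. x \<in> A \<Longrightarrow> f x > 0" "x \<in> A" "Q x"
  shows "(\<Sum>y\<in>{y \<in> A. Q y}. f y) / (\<Sum>y\<in>A. f y) = 1 \<longleftrightarrow> (\<forall>y\<in>A. Q y)"
proof -
  let ?B = "{y \<in> A. \<not> Q y}"
  have "(\<Sum>y\<in>A. f y) = (\<Sum>y\<in>{y \<in> A. Q y} \<union> ?B. f y)"
    by (rule sum.cong) auto
  also have "\<dots> = (\<Sum>y\<in>{y \<in> A. Q y}. f y) + (\<Sum>y\<in>?B. f y)"
    using assms(1) by (intro sum.union_disjoint) auto
  finally have split: "(\<Sum>y\<in>A. f y) = (\<Sum>y\<in>{y \<in> A. Q y}. f y) + (\<Sum>y\<in>?B. f y)" .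
  have "(\<Sum>y\<in>{y \<in> A. Q y}. f y) > 0"
    using assms by (intro sum_pos2[of _ x]) (auto intro: less_imp_le)
  moreover have "(\<Sum>y\<in>?B. f y) = 0 \<longleftrightarrow> (\<forall>y\<in>?B. f y = 0)"
    using assms(1,2) by (intro sum_nonneg_eq_0_iff) (auto intro: less_imp_le)
  moreover have "(\<forall>y\<in>?B. f y = 0) \<longleftrightarrow> ?B = {}"
    using assms(2) by (auto simp: less_le)
  ultimately show ?thesis
    unfolding split by (auto simp: divide_eq_1_iff)
qed

theorem lemma2:
  fixes I :: nat
    and C :: "nat \<Rightarrow> 'v::finite set"
    and act :: "nat \<Rightarrow> 'v"
    and P :: "'v \<Rightarrow> 'v \<Rightarrow> real"
    and w :: "nat \<Rightarrow> 'v \<Rightarrow> real"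
    and N :: "(nat \<times> 'v) set"
    and i :: nat
  assumes "1 \<le> I"
    and "\<And>j. 1 \<le> j \<Longrightarrow> j \<le> I \<Longrightarrow> act j \<in> C j"
    and "\<And>a b. P a b \<ge> 0"
    and "\<And>j. 1 \<le> j \<Longrightarrow> j < I \<Longrightarrow> P (act j) (act (Suc j)) > 0"
    and "\<And>j s. 1 \<le> j \<Longrightarrow> j \<le> I \<Longrightarrow> s \<in> C j \<Longrightarrow> w j s > 0"
    and "\<And>j. 1 \<le> j \<Longrightarrow> j \<le> I \<Longrightarrow> (\<Sum>s\<in>C j. w j s) = 1"
    and "is_feasible_subSUG I C P N"
    and "1 \<le> i" and "i \<le> I"
  shows "disclosure_risk I w P N i (act i) = 1 \<longleftrightarrow> card (layer N i) = 1"
proof -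
  have steps: "(del_step I P)\<^sup>*\<^sup>* (sug_nodes I C) N" and nd: "\<nexists>v. deletable I P N v"
    using assms(7) by (auto simp: is_feasible_subSUG_def)
  have "is_walk P (sug_nodes I C) 1 I act"
    using assms(2,4) by (auto simp: is_walk_def sug_nodes_def Suc_le_eq)
  then have "is_walk P N 1 I act"
    by (rule del_steps_preserve_walk[OF steps])
  then have act_in_layer: "act i \<in> layer N i"
    using assms(8,9) by (auto simp: is_walk_def layer_def)
  have layer: "layer N i = (\<lambda>xs. xs ! (i - 1)) ` feasible_paths I P N"
    using nd assms(8,9) by (rule layer_eq_feasible_path_values)
  then obtain xs where "xs \<in> feasible_paths I P N" "xs ! (i - 1) = act i"
    using act_in_layer by auto
  then have "disclosure_risk I w P N i (act i) = 1 \<longleftrightarrow>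
      (\<forall>ys \<in> feasible_paths I P N. ys ! (i - 1) = act i)"
    unfolding disclosure_risk_def
    using finite_feasible_paths path_weight_pos[OF _ del_steps_subset[OF steps] assms(1,5)]
    by (intro sum_filter_divide_sum_eq_1_iff) auto
  also have "\<dots> \<longleftrightarrow> layer N i = {act i}"
    using act_in_layer unfolding layer by blast
  also have "\<dots> \<longleftrightarrow> card (layer N i) = 1"
    using act_in_layer by (auto simp: card_1_singleton_iff)
  finally show ?thesis .
qed

end
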